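(* For every integer $n\geq 2$, the operator $W_n^{*}$ on $H^2$ is mixing; in particular, $W_n^{*}$ is hypercyclic.
   Context: $H^2$ denotes the Hardy space of analytic functions $f(z)=\sum_{k\ge0}\hat f(k)z^k$ on the open unit disk $\mathbb{D}$ with $\|f\|_2^2=\sum_{k\ge0}|\hat f(k)|^2<\infty$, with inner product $\langle f,g\rangle=\sum_k \hat f(k)\overline{\hat g(k)}$. For $n\in\mathbb{N}$, $W_n$ is the bounded weighted composition operator on $H^2$ given by $W_nf(z)=(1+z+\cdots+z^{n-1})f(z^n)$, and $W_n^{*}$ is its Hilbert-space adjoint. An operator $T$ on a separable Banach space $Y$ is mixing if for every pair of non-empty open sets $U,V\subseteq Y$ there is $N$ with $T^k(U)\cap V\neq\emptyset$ for all $k\geq N$; it is hypercyclic if some $f\in Y$ has dense orbit $\{T^kf: k\in\mathbb{N}\}$. *)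

theory Defs
  imports "HOL-Complex_Analysis.Complex_Analysis"
begin

text \<open>Elements of H^2 are represented as functions on the complex plane that are
  holomorphic on the open unit disk and vanish outside it (so that every element
  of H^2 has exactly one representative).\<close>

definition hcoeff :: "(complex \<Rightarrow> complex) \<Rightarrow> nat \<Rightarrow> complex" where
  "hcoeff f k = (deriv ^^ k) f 0 / of_nat (fact k)"

definition H2 :: "(complex \<Rightarrow> complex) set" where
  "H2 = {f. f holomorphic_on ball 0 1 \<and> (\<forall>z. z \<notin> ball 0 1 \<longrightarrow> f z = 0)
            \<and> summable (\<lambda>k. (cmod (hcoeff f k))\<^sup>2)}"

definition h2_inner :: "(complex \<Rightarrow> complex) \<Rightarrow> (complex \<Rightarrow> complex) \<Rightarrow> complex" where
  "h2_inner f g = (\<Sum>k. hcoeff f k * cnj (hcoeff g k))"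

definition h2_norm :: "(complex \<Rightarrow> complex) \<Rightarrow> real" where
  "h2_norm f = sqrt (\<Sum>k. (cmod (hcoeff f k))\<^sup>2)"

definition h2_open :: "(complex \<Rightarrow> complex) set \<Rightarrow> bool" where
  "h2_open U \<longleftrightarrow> U \<subseteq> H2 \<and>
     (\<forall>f\<in>U. \<exists>e>0. \<forall>g\<in>H2. h2_norm (\<lambda>z. g z - f z) < e \<longrightarrow> g \<in> U)"

definition W :: "nat \<Rightarrow> (complex \<Rightarrow> complex) \<Rightarrow> (complex \<Rightarrow> complex)" where
  "W n f = (\<lambda>z. if z \<in> ball 0 1 then (\<Sum>j<n. z ^ j) * f (z ^ n) else 0)"

definition h2_adjoint :: "((complex \<Rightarrow> complex) \<Rightarrow> (complex \<Rightarrow> complex))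
      \<Rightarrow> (complex \<Rightarrow> complex) \<Rightarrow> (complex \<Rightarrow> complex)" where
  "h2_adjoint T g = (THE h. h \<in> H2 \<and> (\<forall>f\<in>H2. h2_inner (T f) g = h2_inner f h))"

definition h2_mixing :: "((complex \<Rightarrow> complex) \<Rightarrow> (complex \<Rightarrow> complex)) \<Rightarrow> bool" where
  "h2_mixing T \<longleftrightarrow> (\<forall>U V. h2_open U \<and> U \<noteq> {} \<and> h2_open V \<and> V \<noteq> {} \<longrightarrow>
      (\<exists>N. \<forall>k\<ge>N. (T ^^ k) ` U \<inter> V \<noteq> {}))"

definition h2_hypercyclic :: "((complex \<Rightarrow> complex) \<Rightarrow> (complex \<Rightarrow> complex)) \<Rightarrow> bool" where
  "h2_hypercyclic T \<longleftrightarrow> (\<exists>f\<in>H2. \<forall>g\<in>H2. \<forall>e>0. \<exists>k::nat.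
      h2_norm (\<lambda>z. (T ^^ k) f z - g z) < e)"

end

theory Submission
  imports Defs
begin

(* Taylor coefficients identify H^2 with l^2. On coefficients, W_n repeats every entry n times,
   so W_n^* is the block sum B a_k = a_(nk) + ... + a_(nk+n-1). It has the right inverse
   S a_k = a_(k div n) / n, and S^m shrinks norms by the factor n^(-m/2). If p is supported in
   [0, n^m), then B^m collapses it to (sum p) e_0; hence B^m maps p + S^m (q - (sum p) e_0),
   a small perturbation of p, exactly onto q, which gives mixing. For hypercyclicity one sums
   the vectors S^(m_j) w_j along a rapidly increasing sequence m_j, where w_j is the j-th
   element of a countable dense set, corrected at e_0 so that B^(m_j) of the earlier terms
   telescopes away; the later terms are negligible. *)

section \<open>Square-summable sequences\<close>

definition l2_seq :: "(nat \<Rightarrow> complex) \<Rightarrow> bool" where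
  "l2_seq a \<longleftrightarrow> summable (\<lambda>k. (cmod (a k))\<^sup>2)"

definition l2_norm :: "(nat \<Rightarrow> complex) \<Rightarrow> real" where
  "l2_norm a = sqrt (\<Sum>k. (cmod (a k))\<^sup>2)"

lemma l2_norm_nonneg: "l2_seq a \<Longrightarrow> 0 \<le> l2_norm a"
  unfolding l2_norm_def l2_seq_def by (simp add: suminf_nonneg)

lemma L2_set_le_l2_norm:
  assumes "l2_seq a"
  shows "L2_set (\<lambda>k. cmod (a k)) {..<K} \<le> l2_norm a"
proof -
  have "(\<Sum>k<K. (cmod (a k))\<^sup>2) \<le> (\<Sum>k. (cmod (a k))\<^sup>2)"
    using assms unfolding l2_seq_def by (intro sum_le_suminf) auto
  thus ?thesis unfolding L2_set_def l2_norm_def by simp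
qed

lemma norm_le_l2_norm:
  assumes "l2_seq a"
  shows "cmod (a k) \<le> l2_norm a"
proof -
  have "cmod (a k) = L2_set (\<lambda>k. cmod (a k)) {k}" by (simp add: L2_set_def)
  also have "\<dots> \<le> L2_set (\<lambda>k. cmod (a k)) {..<Suc k}"
    unfolding L2_set_def by (intro real_sqrt_le_mono sum_mono2) auto
  also have "\<dots> \<le> l2_norm a" by (rule L2_set_le_l2_norm[OF assms])
  finally show ?thesis .
qed

lemma l2_seq_l2_norm_le_if_L2_set_bounded:
  assumes "\<And>K. L2_set (\<lambda>k. cmod (a k)) {..<K} \<le> B"
  shows "l2_seq a" "l2_norm a \<le> B"
proof -
  have "0 \<le> B" using assms[of 0] by simp
  have partial: "(\<Sum>k<K. (cmod (a k))\<^sup>2) \<le> B\<^sup>2" for K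
    using assms[of K] by (simp add: L2_set_def sqrt_le_D)
  show summable: "l2_seq a" unfolding l2_seq_def
    by (rule bounded_imp_summable[where B="B\<^sup>2"])
       (use partial[of "Suc _"] in \<open>auto simp: lessThan_Suc_atMost\<close>)
  have "(\<Sum>k. (cmod (a k))\<^sup>2) \<le> B\<^sup>2"
    using summable unfolding l2_seq_def by (intro suminf_le_const partial)
  thus "l2_norm a \<le> B" unfolding l2_norm_def using \<open>0 \<le> B\<close> by (rule real_le_lsqrt[rotated])
qed

lemma l2_seq_finite_support:
  assumes "\<And>k. K \<le> k \<Longrightarrow> a k = 0"
  shows "l2_seq a" "l2_norm a = L2_set (\<lambda>k. cmod (a k)) {..<K}"
proof -
  have "(\<Sum>k. (cmod (a k))\<^sup>2) = (\<Sum>k<K. (cmod (a k))\<^sup>2)"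
    using assms by (intro suminf_finite) auto
  thus "l2_norm a = L2_set (\<lambda>k. cmod (a k)) {..<K}" by (simp add: l2_norm_def L2_set_def)
  show "l2_seq a" unfolding l2_seq_def using assms by (intro summable_finite[of "{..<K}"]) auto
qed

lemma l2_seq_add:
  assumes "l2_seq a" "l2_seq b"
  shows "l2_seq (\<lambda>k. a k + b k)" "l2_norm (\<lambda>k. a k + b k) \<le> l2_norm a + l2_norm b"
proof -
  have "L2_set (\<lambda>k. cmod (a k + b k)) {..<K} \<le> l2_norm a + l2_norm b" for K
  proof -
    have "L2_set (\<lambda>k. cmod (a k + b k)) {..<K} \<le> L2_set (\<lambda>k. cmod (a k) + cmod (b k)) {..<K}"
      by (intro L2_set_mono norm_triangle_ineq) auto
    also have "\<dots> \<le> L2_set (\<lambda>k. cmod (a k)) {..<K} + L2_set (\<lambda>k. cmod (b k)) {..<K}"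
      by (rule L2_set_triangle_ineq)
    also have "\<dots> \<le> l2_norm a + l2_norm b"
      using assms by (intro add_mono L2_set_le_l2_norm)
    finally show ?thesis .
  qed
  thus "l2_seq (\<lambda>k. a k + b k)" "l2_norm (\<lambda>k. a k + b k) \<le> l2_norm a + l2_norm b"
    by (rule l2_seq_l2_norm_le_if_L2_set_bounded)+
qed

lemma l2_seq_diff:
  assumes "l2_seq a" "l2_seq b"
  shows "l2_seq (\<lambda>k. a k - b k)"
  using l2_seq_add(1)[of a "\<lambda>k. - b k"] assms by (simp add: l2_seq_def)

lemma l2_norm_diff_triangle:
  assumes "l2_seq a" "l2_seq b" "l2_seq c"
  shows "l2_norm (\<lambda>k. a k - c k) \<le> l2_norm (\<lambda>k. a k - b k) + l2_norm (\<lambda>k. b k - c k)"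
  using l2_seq_add(2)[of "\<lambda>k. a k - b k" "\<lambda>k. b k - c k"] l2_seq_diff assms by simp

lemma l2_seq_divide:
  assumes "l2_seq a"
  shows "l2_seq (\<lambda>k. a k / c)" "l2_norm (\<lambda>k. a k / c) = l2_norm a / cmod c"
proof -
  have "(\<lambda>k. (cmod (a k))\<^sup>2 / (cmod c)\<^sup>2) sums ((\<Sum>k. (cmod (a k))\<^sup>2) / (cmod c)\<^sup>2)"
    using assms unfolding l2_seq_def by (intro sums_divide summable_sums)
  hence "(\<lambda>k. (cmod (a k / c))\<^sup>2) sums ((\<Sum>k. (cmod (a k))\<^sup>2) / (cmod c)\<^sup>2)"
    by (simp add: norm_divide power_divide)
  thus "l2_seq (\<lambda>k. a k / c)" "l2_norm (\<lambda>k. a k / c) = l2_norm a / cmod c"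
    by (auto simp: l2_seq_def l2_norm_def sums_iff real_sqrt_divide)
qed

lemma l2_seq_suminf:
  assumes l2: "\<And>l. l2_seq (u l)" and summable: "summable (\<lambda>l. l2_norm (u l))"
  shows "\<And>k. summable (\<lambda>l. u l k)" "l2_seq (\<lambda>k. \<Sum>l. u l k)"
    "l2_norm (\<lambda>k. \<Sum>l. u l k) \<le> (\<Sum>l. l2_norm (u l))"
proof -
  show coordinatewise: "summable (\<lambda>l. u l k)" for k
    by (rule summable_comparison_test[OF _ summable]) (use norm_le_l2_norm[OF l2] in auto)
  have "L2_set (\<lambda>k. cmod (\<Sum>l. u l k)) {..<K} \<le> (\<Sum>l. l2_norm (u l))" for K
  proof -
    have partial: "L2_set (\<lambda>k. cmod (\<Sum>l<L. u l k)) {..<K} \<le> (\<Sum>l. l2_norm (u l))" for L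
    proof -
      have "L2_set (\<lambda>k. cmod (\<Sum>l<L. u l k)) {..<K} \<le> (\<Sum>l<L. L2_set (\<lambda>k. cmod (u l k)) {..<K})"
      proof (induction L)
        case (Suc L)
        have "L2_set (\<lambda>k. cmod (\<Sum>l<Suc L. u l k)) {..<K}
              \<le> L2_set (\<lambda>k. cmod (\<Sum>l<L. u l k) + cmod (u L k)) {..<K}"
          by (intro L2_set_mono) (auto intro: norm_triangle_ineq)
        also have "\<dots> \<le> L2_set (\<lambda>k. cmod (\<Sum>l<L. u l k)) {..<K} + L2_set (\<lambda>k. cmod (u L k)) {..<K}"
          by (rule L2_set_triangle_ineq)
        finally show ?case using Suc by simp
      qed (simp add: L2_set_def)
      also have "\<dots> \<le> (\<Sum>l<L. l2_norm (u l))" by (intro sum_mono L2_set_le_l2_norm l2)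
      also have "\<dots> \<le> (\<Sum>l. l2_norm (u l))"
        using summable by (intro sum_le_suminf) (auto intro: l2_norm_nonneg l2)
      finally show ?thesis .
    qed
    have "(\<lambda>L. L2_set (\<lambda>k. cmod (\<Sum>l<L. u l k)) {..<K})
            \<longlonglongrightarrow> L2_set (\<lambda>k. cmod (\<Sum>l. u l k)) {..<K}"
      unfolding L2_set_def
      by (intro tendsto_real_sqrt tendsto_sum tendsto_power tendsto_norm summable_LIMSEQ coordinatewise)
    thus ?thesis using partial by (intro LIMSEQ_le_const2) auto
  qed
  thus "l2_seq (\<lambda>k. \<Sum>l. u l k)" "l2_norm (\<lambda>k. \<Sum>l. u l k) \<le> (\<Sum>l. l2_norm (u l))"
    by (rule l2_seq_l2_norm_le_if_L2_set_bounded)+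
qed

lemma sum_atLeastLessThan_add: "sum f {m..<m + d} = (\<Sum>j<d. f (m + j))"
  for m d :: nat
  by (induction d) auto

lemma sum_lessThan_blocks: "(\<Sum>i<A. \<Sum>j<d. f (d * i + j)) = (\<Sum>i<A * d. f i)"
  for d A :: nat
  using sum.nat_group[of f d A] by (simp add: sum_atLeastLessThan_add mult.commute)

lemma sums_blocks:
  assumes "f sums s" "0 < d"
  shows "(\<lambda>i. \<Sum>j<d. f (d * i + j)) sums s"
  using sums_group[OF assms] by (simp add: sum_atLeastLessThan_add mult.commute)

lemma l2_seq_stretch:
  assumes a: "l2_seq a" and d: "1 \<le> d"
  shows "l2_seq (\<lambda>k. a (k div d))" "l2_norm (\<lambda>k. a (k div d)) = sqrt d * l2_norm a"
proof -
  define g where "g k = (cmod (a (k div d)))\<^sup>2" for k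
  have block: "(\<Sum>j<d. g (d * i + j)) = d * (cmod (a i))\<^sup>2" for i
    using d by (simp add: g_def)
  have partial: "sum g {..<N} \<le> d * (\<Sum>k. (cmod (a k))\<^sup>2)" for N
  proof -
    have "sum g {..<N} \<le> sum g {..<N * d}"
      using d by (intro sum_mono2) (auto simp: g_def)
    also have "\<dots> = d * (\<Sum>i<N. (cmod (a i))\<^sup>2)"
      by (simp add: sum_lessThan_blocks[symmetric] block sum_distrib_left)
    also have "\<dots> \<le> d * (\<Sum>k. (cmod (a k))\<^sup>2)"
      using a unfolding l2_seq_def by (intro mult_left_mono sum_le_suminf) auto
    finally show ?thesis .
  qed
  have "summable g"
    by (rule bounded_imp_summable) (use partial[of "Suc _"] in \<open>auto simp: g_def lessThan_Suc_atMost\<close>)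
  thus "l2_seq (\<lambda>k. a (k div d))" unfolding l2_seq_def g_def .
  have "(\<lambda>i. d * (cmod (a i))\<^sup>2) sums suminf g"
    using sums_blocks[OF summable_sums[OF \<open>summable g\<close>], of d] d by (simp add: block)
  moreover have "(\<lambda>i. d * (cmod (a i))\<^sup>2) sums (d * (\<Sum>k. (cmod (a k))\<^sup>2))"
    using a unfolding l2_seq_def by (intro sums_mult summable_sums)
  ultimately have "suminf g = d * (\<Sum>k. (cmod (a k))\<^sup>2)" by (rule sums_unique2)
  thus "l2_norm (\<lambda>k. a (k div d)) = sqrt d * l2_norm a"
    unfolding l2_norm_def g_def[symmetric] by (simp add: real_sqrt_mult)
qed

definition rat_seq :: "(rat \<times> rat) list \<Rightarrow> nat \<Rightarrow> complex" where
  "rat_seq xs k = (if k < length xs then Complex (of_rat (fst (xs ! k))) (of_rat (snd (xs ! k))) else 0)"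

lemma rat_seq_eq_0: "length xs \<le> k \<Longrightarrow> rat_seq xs k = 0"
  by (simp add: rat_seq_def)

lemma l2_seq_rat_seq: "l2_seq (rat_seq xs)"
  by (rule l2_seq_finite_support) (rule rat_seq_eq_0)

lemma exists_rat_pair_approx:
  fixes z :: complex
  assumes "0 < d"
  shows "\<exists>q::rat \<times> rat. cmod (Complex (of_rat (fst q)) (of_rat (snd q)) - z) < d"
proof -
  obtain r1 where r1: "r1 \<in> \<rat>" "Re z - d/2 < r1" "r1 < Re z + d/2"
    using Rats_dense_in_real[of "Re z - d/2" "Re z + d/2"] assms by auto
  obtain r2 where r2: "r2 \<in> \<rat>" "Im z - d/2 < r2" "r2 < Im z + d/2"
    using Rats_dense_in_real[of "Im z - d/2" "Im z + d/2"] assms by auto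
  obtain q1 q2 where "r1 = of_rat q1" "r2 = of_rat q2" using r1(1) r2(1) Rats_cases by metis
  moreover have "cmod (Complex r1 r2 - z) \<le> \<bar>Re (Complex r1 r2 - z)\<bar> + \<bar>Im (Complex r1 r2 - z)\<bar>"
    by (rule cmod_le)
  ultimately show ?thesis using r1 r2 by (intro exI[of _ "(q1, q2)"]) (simp add: abs_less_iff)
qed

lemma l2_norm_truncation_less:
  assumes a: "l2_seq a" and e: "0 < e"
  obtains K where "l2_norm (\<lambda>k. (if k < K then a k else 0) - a k) < e"
proof -
  have summable: "summable (\<lambda>k. (cmod (a k))\<^sup>2)" using a by (simp add: l2_seq_def)
  obtain K where K: "norm (\<Sum>i. (cmod (a (i + K)))\<^sup>2) < e\<^sup>2"
    using suminf_exist_split[OF _ summable, of "e\<^sup>2"] e by auto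
  define b where "b k = (if k < K then a k else 0) - a k" for k
  have "summable (\<lambda>k. (cmod (b k))\<^sup>2)"
    using summable by (rule summable_comparison_test'[where N=0]) (simp add: b_def)
  hence "(\<Sum>k. (cmod (b k))\<^sup>2) = (\<Sum>i. (cmod (b (i + K)))\<^sup>2) + (\<Sum>k<K. (cmod (b k))\<^sup>2)"
    by (rule suminf_split_initial_segment)
  also have "\<dots> = (\<Sum>i. (cmod (a (i + K)))\<^sup>2)" by (simp add: b_def)
  also have "\<dots> < e\<^sup>2" using K by simp
  finally have "l2_norm b < sqrt (e\<^sup>2)" unfolding l2_norm_def by (rule real_sqrt_less_mono)
  thus ?thesis using e that by (simp add: b_def[abs_def])
qed

lemma rat_seq_dense:
  assumes a: "l2_seq a" and e: "0 < e"
  shows "\<exists>xs. l2_norm (\<lambda>k. rat_seq xs k - a k) < e"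
proof -
  obtain K where K: "l2_norm (\<lambda>k. (if k < K then a k else 0) - a k) < e/2"
    using l2_norm_truncation_less[OF a, of "e/2"] e by auto
  define t where "t k = (if k < K then a k else 0)" for k
  have t: "l2_seq t" by (rule l2_seq_finite_support[of K]) (simp add: t_def)
  have "\<forall>k. \<exists>q::rat \<times> rat. cmod (Complex (of_rat (fst q)) (of_rat (snd q)) - a k) < e / (2 * (K + 1))"
    using exists_rat_pair_approx e by simp
  then obtain Q where Q: "\<And>k. cmod (Complex (of_rat (fst (Q k))) (of_rat (snd (Q k))) - a k) < e / (2 * (K + 1))"
    by metis
  define xs where "xs = map Q [0..<K]"
  have "l2_norm (\<lambda>k. rat_seq xs k - t k) = L2_set (\<lambda>k. cmod (rat_seq xs k - t k)) {..<K}"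
    by (rule l2_seq_finite_support) (simp add: t_def rat_seq_def xs_def)
  also have "\<dots> \<le> (\<Sum>k<K. cmod (rat_seq xs k - t k))" by (rule L2_set_le_sum) simp
  also have "\<dots> \<le> (\<Sum>k<K. e / (2 * (K + 1)))"
    using Q by (intro sum_mono) (simp add: t_def rat_seq_def xs_def less_imp_le)
  also have "\<dots> < e/2" using e by (simp add: field_simps)
  finally have "l2_norm (\<lambda>k. rat_seq xs k - t k) < e/2" .
  moreover have "l2_norm (\<lambda>k. rat_seq xs k - a k)
      \<le> l2_norm (\<lambda>k. rat_seq xs k - t k) + l2_norm (\<lambda>k. t k - a k)"
    by (rule l2_norm_diff_triangle[OF l2_seq_rat_seq t a])
  ultimately show ?thesis using K unfolding t_def by (intro exI[of _ xs]) linarith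
qed

section \<open>Block sums and their right inverse\<close>

definition block_sum :: "nat \<Rightarrow> (nat \<Rightarrow> complex) \<Rightarrow> nat \<Rightarrow> complex" where
  "block_sum n a k = (\<Sum>j<n. a (n * k + j))"

definition spread :: "nat \<Rightarrow> (nat \<Rightarrow> complex) \<Rightarrow> nat \<Rightarrow> complex" where
  "spread n a k = a (k div n) / of_nat n"

lemma block_sum_pow: "(block_sum n ^^ m) a k = (\<Sum>i<n ^ m. a (n ^ m * k + i))"
proof (induction m arbitrary: a k)
  case (Suc m)
  have "(block_sum n ^^ Suc m) a k = (\<Sum>i<n ^ m. \<Sum>j<n. a (n * (n ^ m * k + i) + j))"
    by (simp add: funpow_Suc_right Suc block_sum_def del: funpow.simps)
  also have "\<dots> = (\<Sum>i<n ^ m. \<Sum>j<n. (\<lambda>i. a (n ^ Suc m * k + i)) (n * i + j))"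
    by (simp add: algebra_simps)
  also have "\<dots> = (\<Sum>i<n ^ m * n. a (n ^ Suc m * k + i))"
    by (rule sum_lessThan_blocks)
  finally show ?case by (simp only: power_Suc2)
qed simp

lemma spread_pow:
  assumes "1 \<le> n"
  shows "(spread n ^^ m) a k = a (k div n ^ m) / of_nat (n ^ m)"
  by (induction m arbitrary: k) (use assms in \<open>simp_all add: spread_def div_mult2_eq mult.commute\<close>)

lemma block_sum_spread:
  assumes "1 \<le> n"
  shows "block_sum n (spread n a) = a"
  using assms by (simp add: fun_eq_iff block_sum_def spread_def)

lemma block_sum_pow_spread_pow:
  assumes "1 \<le> n"
  shows "(block_sum n ^^ m) ((spread n ^^ m) a) = a"
proof (induction m arbitrary: a)
  case (Suc m)
  have "(block_sum n ^^ Suc m) ((spread n ^^ Suc m) a)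
      = block_sum n ((block_sum n ^^ m) ((spread n ^^ m) (spread n a)))"
    by (simp add: funpow_Suc_right[of m "spread n"] del: funpow.simps(2)) simp
  thus ?case using Suc block_sum_spread[OF assms] by simp
qed simp

lemma block_sum_pow_spread_pow_le:
  assumes "1 \<le> n" "p \<le> q"
  shows "(block_sum n ^^ p) ((spread n ^^ q) a) = (spread n ^^ (q - p)) a"
  using assms block_sum_pow_spread_pow[of n p] funpow_add[of p "q - p" "spread n"] by simp

lemma block_sum_pow_spread_pow_ge:
  assumes "1 \<le> n" "q \<le> p"
  shows "(block_sum n ^^ p) ((spread n ^^ q) a) = (block_sum n ^^ (p - q)) a"
  using assms block_sum_pow_spread_pow[of n q] funpow_add[of "p - q" q "block_sum n"] by simp

lemma l2_seq_spread_pow: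
  assumes "1 \<le> n" "l2_seq a"
  shows "l2_seq ((spread n ^^ m) a)" "l2_norm ((spread n ^^ m) a) = l2_norm a / sqrt (n ^ m)"
proof -
  have "1 \<le> n ^ m" using assms(1) by simp
  note stretch = l2_seq_stretch[OF assms(2) this]
  have "(spread n ^^ m) a = (\<lambda>k. a (k div n ^ m) / of_nat (n ^ m))"
    using spread_pow[OF assms(1)] by auto
  thus "l2_seq ((spread n ^^ m) a)" "l2_norm ((spread n ^^ m) a) = l2_norm a / sqrt (n ^ m)"
    using l2_seq_divide[OF stretch(1), of "of_nat (n ^ m)"] \<open>1 \<le> n ^ m\<close>
    by (simp_all add: stretch(2) del: of_nat_power)
       (metis divide_divide_eq_right mult.commute real_div_sqrt of_nat_0_le_iff)
qed

lemma l2_seq_block_sum: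
  assumes a: "l2_seq a"
  shows "l2_seq (block_sum n a)" "l2_norm (block_sum n a) \<le> sqrt n * l2_norm a"
proof -
  have "L2_set (\<lambda>k. cmod (block_sum n a k)) {..<K} \<le> sqrt n * l2_norm a" for K
  proof -
    have block: "cmod (block_sum n a k) \<le> sqrt n * L2_set (\<lambda>j. cmod (a (n * k + j))) {..<n}" for k
    proof -
      have "cmod (block_sum n a k) \<le> (\<Sum>j<n. \<bar>cmod (a (n * k + j))\<bar> * \<bar>1\<bar>)"
        unfolding block_sum_def by (simp add: norm_sum)
      also have "\<dots> \<le> L2_set (\<lambda>j. cmod (a (n * k + j))) {..<n} * L2_set (\<lambda>j. 1) {..<n}"
        by (rule L2_set_mult_ineq)
      finally show ?thesis by (simp add: L2_set_constant mult.commute)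
    qed
    have "L2_set (\<lambda>k. cmod (block_sum n a k)) {..<K}
        \<le> L2_set (\<lambda>k. sqrt n * L2_set (\<lambda>j. cmod (a (n * k + j))) {..<n}) {..<K}"
      by (intro L2_set_mono block) simp
    also have "\<dots> = sqrt n * L2_set (\<lambda>i. cmod (a i)) {..<K * n}"
      by (simp add: L2_set_right_distrib[symmetric])
         (simp add: L2_set_def sum_nonneg sum_lessThan_blocks[of "\<lambda>i. (cmod (a i))\<^sup>2"])
    also have "\<dots> \<le> sqrt n * l2_norm a" by (intro mult_left_mono L2_set_le_l2_norm a) simp
    finally show ?thesis .
  qed
  thus "l2_seq (block_sum n a)" "l2_norm (block_sum n a) \<le> sqrt n * l2_norm a"
    by (rule l2_seq_l2_norm_le_if_L2_set_bounded)+
qed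

lemma l2_seq_block_sum_pow: "l2_seq a \<Longrightarrow> l2_seq ((block_sum n ^^ m) a)"
  by (induction m) (auto intro: l2_seq_block_sum)

lemma block_sum_pow_finite_support:
  assumes support: "\<And>k. L \<le> k \<Longrightarrow> a k = 0" and "L \<le> n ^ m"
  shows "(block_sum n ^^ m) a = (\<lambda>k. if k = 0 then (\<Sum>i<L. a i) else 0)"
proof
  fix k
  show "(block_sum n ^^ m) a k = (if k = 0 then (\<Sum>i<L. a i) else 0)"
  proof (cases "k = 0")
    case True
    have "(\<Sum>i<n ^ m. a i) = (\<Sum>i<L. a i)"
      using assms by (intro sum.mono_neutral_right) auto
    thus ?thesis using True by (simp add: block_sum_pow)
  next
    case False
    hence "n ^ m \<le> n ^ m * k" by simp
    hence "L \<le> n ^ m * k + i" for i using \<open>L \<le> n ^ m\<close> by linarith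
    thus ?thesis using False support by (simp add: block_sum_pow)
  qed
qed

lemma block_sum_pow_add:
  "(block_sum n ^^ m) (\<lambda>k. a k + b k) = (\<lambda>k. (block_sum n ^^ m) a k + (block_sum n ^^ m) b k)"
  by (simp add: fun_eq_iff block_sum_pow sum.distrib)

lemma block_sum_pow_suminf:
  assumes "\<And>k. summable (\<lambda>l. u l k)"
  shows "(block_sum n ^^ m) (\<lambda>k. \<Sum>l. u l k) = (\<lambda>k. \<Sum>l. (block_sum n ^^ m) (u l) k)"
  by (simp add: fun_eq_iff block_sum_pow suminf_sum assms)

section \<open>Taylor coefficients identify \<open>H\<^sup>2\<close> with \<open>\<ell>\<^sup>2\<close>\<close>

definition h2_of_coeffs :: "(nat \<Rightarrow> complex) \<Rightarrow> complex \<Rightarrow> complex" where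
  "h2_of_coeffs a = (\<lambda>z. if z \<in> ball 0 1 then (\<Sum>k. a k * z ^ k) else 0)"

lemma summable_l2_power_series:
  assumes a: "l2_seq a" and z: "cmod z < 1"
  shows "summable (\<lambda>k. a k * z ^ k)"
proof -
  have "summable (\<lambda>k. l2_norm a * cmod z ^ k)"
    using z by (intro summable_mult summable_geometric) auto
  thus ?thesis
    by (rule summable_comparison_test[rotated])
       (auto simp: norm_mult norm_power intro!: mult_right_mono norm_le_l2_norm a)
qed

lemma h2_of_coeffs_in_H2:
  assumes a: "l2_seq a"
  shows "h2_of_coeffs a \<in> H2" "hcoeff (h2_of_coeffs a) = a"
proof -
  have radius: "1 \<le> fps_conv_radius (Abs_fps a)"
    unfolding fps_conv_radius_def
    by (rule conv_radius_geI_ex') (auto intro!: summable_l2_power_series a)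
  have eq: "h2_of_coeffs a z = eval_fps (Abs_fps a) z" if "z \<in> ball 0 1" for z
    using that by (simp add: h2_of_coeffs_def eval_fps_def)
  have "eval_fps (Abs_fps a) holomorphic_on ball 0 1"
  proof (rule holomorphic_on_eval_fps, rule subsetI)
    fix z :: complex assume "z \<in> ball 0 1"
    hence "ereal (cmod z) < 1" by (simp add: one_ereal_def)
    hence "ereal (cmod z) < fps_conv_radius (Abs_fps a)"
      using radius by (rule order_less_le_trans)
    thus "z \<in> eball 0 (fps_conv_radius (Abs_fps a))" by simp
  qed
  hence holo: "h2_of_coeffs a holomorphic_on ball 0 1"
    by (rule holomorphic_transform) (simp add: eq)
  have "h2_of_coeffs a has_fps_expansion Abs_fps a"
    unfolding has_fps_expansion_def
  proof
    have "(0::ereal) < 1" by simp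
    thus "0 < fps_conv_radius (Abs_fps a)" using radius by (rule order_less_le_trans)
    show "\<forall>\<^sub>F z in nhds 0. eval_fps (Abs_fps a) z = h2_of_coeffs a z"
      using eventually_nhds_in_open[of "ball 0 1" 0] by (rule eventually_mono) (auto simp: eq)
  qed
  from fps_nth_fps_expansion[OF this] show coeffs: "hcoeff (h2_of_coeffs a) = a"
    by (simp add: fun_eq_iff hcoeff_def)
  show "h2_of_coeffs a \<in> H2"
    unfolding H2_def using holo a coeffs by (auto simp: h2_of_coeffs_def l2_seq_def)
qed

lemma H2_eq_h2_of_coeffs:
  assumes f: "f \<in> H2"
  shows "h2_of_coeffs (hcoeff f) = f" "l2_seq (hcoeff f)"
proof -
  show "l2_seq (hcoeff f)" using f by (simp add: H2_def l2_seq_def)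
  show "h2_of_coeffs (hcoeff f) = f"
  proof
    fix z
    show "h2_of_coeffs (hcoeff f) z = f z"
    proof (cases "z \<in> ball 0 1")
      case True
      have "(\<lambda>k. (deriv ^^ k) f 0 / fact k * (z - 0) ^ k) sums f z"
        using f True by (intro holomorphic_power_series) (auto simp: H2_def)
      thus ?thesis using True by (simp add: h2_of_coeffs_def hcoeff_def sums_iff)
    qed (use f in \<open>simp add: h2_of_coeffs_def H2_def\<close>)
  qed
qed

lemma h2_norm_diff_h2_of_coeffs:
  assumes a: "l2_seq a" and f: "f \<in> H2"
  shows "h2_norm (\<lambda>z. h2_of_coeffs a z - f z) = l2_norm (\<lambda>k. a k - hcoeff f k)"
proof -
  note f_coeffs = H2_eq_h2_of_coeffs[OF f]
  have "(\<lambda>z. h2_of_coeffs a z - f z) = h2_of_coeffs (\<lambda>k. a k - hcoeff f k)"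
  proof
    fix z
    show "h2_of_coeffs a z - f z = h2_of_coeffs (\<lambda>k. a k - hcoeff f k) z"
    proof (cases "z \<in> ball 0 1")
      case True
      hence "(\<Sum>k. a k * z ^ k) - (\<Sum>k. hcoeff f k * z ^ k) = (\<Sum>k. (a k - hcoeff f k) * z ^ k)"
        using a f_coeffs(2) by (subst suminf_diff) (auto intro: summable_l2_power_series simp: left_diff_distrib)
      thus ?thesis using True arg_cong[OF f_coeffs(1), of "\<lambda>g. g z"] by (simp add: h2_of_coeffs_def)
    qed (use f in \<open>simp add: h2_of_coeffs_def H2_def\<close>)
  qed
  moreover have "l2_seq (\<lambda>k. a k - hcoeff f k)" using a f_coeffs(2) by (rule l2_seq_diff)
  ultimately show ?thesis by (simp add: h2_norm_def l2_norm_def h2_of_coeffs_in_H2(2))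
qed

lemma h2_open_contains_coeff_ball:
  assumes "h2_open U" "f \<in> U"
  obtains e where "0 < e"
    "\<And>a. l2_seq a \<Longrightarrow> l2_norm (\<lambda>k. a k - hcoeff f k) < e \<Longrightarrow> h2_of_coeffs a \<in> U"
proof -
  obtain e where "0 < e" and e: "\<And>g. g \<in> H2 \<Longrightarrow> h2_norm (\<lambda>z. g z - f z) < e \<Longrightarrow> g \<in> U"
    using assms unfolding h2_open_def by blast
  have "f \<in> H2" using assms unfolding h2_open_def by blast
  show ?thesis
    using that[OF \<open>0 < e\<close>] e h2_of_coeffs_in_H2(1) h2_norm_diff_h2_of_coeffs[OF _ \<open>f \<in> H2\<close>]
    by simp
qed

section \<open>The adjoint of \<open>W\<^sub>n\<close> acts on coefficients as a block sum\<close>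

lemma W_eq_h2_of_coeffs:
  assumes n: "1 \<le> n" and f: "f \<in> H2"
  shows "W n f = h2_of_coeffs (\<lambda>k. hcoeff f (k div n))"
proof
  fix z
  define a where "a = hcoeff f"
  have a: "l2_seq a" using H2_eq_h2_of_coeffs(2)[OF f] by (simp add: a_def)
  show "W n f z = h2_of_coeffs (\<lambda>k. hcoeff f (k div n)) z"
  proof (cases "z \<in> ball 0 1")
    case True
    hence z: "cmod z < 1" by simp
    hence zn: "cmod (z ^ n) < 1" using n by (simp add: norm_power power_less_one_iff)
    have "(\<lambda>m. \<Sum>j<n. a ((n * m + j) div n) * z ^ (n * m + j)) sums (\<Sum>k. a (k div n) * z ^ k)"
      using n by (intro sums_blocks summable_sums summable_l2_power_series[OF l2_seq_stretch(1)[OF a n] z]) auto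
    moreover have "(\<Sum>j<n. a ((n * m + j) div n) * z ^ (n * m + j)) = (\<Sum>j<n. z ^ j) * (a m * (z ^ n) ^ m)" for m
      using n by (simp add: sum_distrib_left sum_distrib_right power_add algebra_simps flip: power_mult)
    moreover have "(\<lambda>m. (\<Sum>j<n. z ^ j) * (a m * (z ^ n) ^ m)) sums ((\<Sum>j<n. z ^ j) * f (z ^ n))"
      using summable_l2_power_series[OF a zn] zn arg_cong[OF H2_eq_h2_of_coeffs(1)[OF f], of "\<lambda>g. g (z ^ n)"]
      by (intro sums_mult) (simp add: h2_of_coeffs_def a_def sums_iff)
    ultimately show ?thesis using True by (simp add: W_def h2_of_coeffs_def a_def sums_unique2)
  qed (simp add: W_def h2_of_coeffs_def)
qed

lemma summable_l2_inner:
  assumes "l2_seq a" "l2_seq b"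
  shows "summable (\<lambda>k. a k * cnj (b k))"
proof (rule summable_comparison_test')
  show "summable (\<lambda>k. (cmod (a k))\<^sup>2 + (cmod (b k))\<^sup>2)"
    using assms unfolding l2_seq_def by (rule summable_add)
  have "norm (a k * cnj (b k)) \<le> 2 * cmod (a k) * cmod (b k)" for k by (simp add: norm_mult)
  also have "\<dots> k \<le> (cmod (a k))\<^sup>2 + (cmod (b k))\<^sup>2" for k by (rule sum_squares_bound)
  finally show "norm (a k * cnj (b k)) \<le> (cmod (a k))\<^sup>2 + (cmod (b k))\<^sup>2" for k .
qed

lemma h2_inner_W:
  assumes n: "1 \<le> n" and f: "f \<in> H2" and g: "g \<in> H2"
  shows "h2_inner (W n f) g = h2_inner f (h2_of_coeffs (block_sum n (hcoeff g)))"
proof -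
  define a where "a = hcoeff f"
  define c where "c = hcoeff g"
  have a: "l2_seq a" and c: "l2_seq c"
    using H2_eq_h2_of_coeffs(2) f g by (auto simp: a_def c_def)
  have stretch: "l2_seq (\<lambda>k. a (k div n))" by (rule l2_seq_stretch(1)[OF a n])
  have "h2_inner (W n f) g = (\<Sum>k. a (k div n) * cnj (c k))"
    using W_eq_h2_of_coeffs[OF n f] h2_of_coeffs_in_H2(2)[OF stretch]
    by (simp add: h2_inner_def a_def c_def)
  moreover have "(\<lambda>m. \<Sum>j<n. a ((n * m + j) div n) * cnj (c (n * m + j))) sums (\<Sum>k. a (k div n) * cnj (c k))"
    using n by (intro sums_blocks summable_sums summable_l2_inner[OF stretch c]) simp
  moreover have "(\<Sum>j<n. a ((n * m + j) div n) * cnj (c (n * m + j))) = a m * cnj (block_sum n c m)" for m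
    using n by (simp add: block_sum_def sum_distrib_left)
  ultimately show ?thesis
    using h2_of_coeffs_in_H2(2)[OF l2_seq_block_sum(1)[OF c]]
    by (simp add: h2_inner_def sums_iff a_def c_def)
qed

lemma H2_eq_if_h2_inner_eq:
  assumes "h \<in> H2" "h' \<in> H2" and inner: "\<And>f. f \<in> H2 \<Longrightarrow> h2_inner f h = h2_inner f h'"
  shows "h = h'"
proof -
  have "hcoeff h = hcoeff h'"
  proof
    fix k :: nat
    define e where "e i = (if i = k then 1 else 0 :: complex)" for i
    have e: "l2_seq e" by (rule l2_seq_finite_support[of "Suc k"]) (simp add: e_def)
    have "h2_inner (h2_of_coeffs e) q = cnj (hcoeff q k)" for q
      unfolding h2_inner_def h2_of_coeffs_in_H2(2)[OF e]
      by (subst suminf_finite[of "{k}"]) (auto simp: e_def)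
    thus "hcoeff h k = hcoeff h' k" using inner[OF h2_of_coeffs_in_H2(1)[OF e]] by simp
  qed
  hence "h2_of_coeffs (hcoeff h) = h2_of_coeffs (hcoeff h')" by (rule arg_cong)
  thus "h = h'" by (simp only: H2_eq_h2_of_coeffs(1)[OF assms(1)] H2_eq_h2_of_coeffs(1)[OF assms(2)])
qed

lemma h2_adjoint_W:
  assumes n: "1 \<le> n" and g: "g \<in> H2"
  shows "h2_adjoint (W n) g = h2_of_coeffs (block_sum n (hcoeff g))"
  unfolding h2_adjoint_def
proof (rule the_equality)
  have "h2_of_coeffs (block_sum n (hcoeff g)) \<in> H2"
    using h2_of_coeffs_in_H2(1)[OF l2_seq_block_sum(1)[OF H2_eq_h2_of_coeffs(2)[OF g]]] .
  thus adjoint: "h2_of_coeffs (block_sum n (hcoeff g)) \<in> H2 \<and>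
      (\<forall>f\<in>H2. h2_inner (W n f) g = h2_inner f (h2_of_coeffs (block_sum n (hcoeff g))))"
    using h2_inner_W[OF n _ g] by blast
  show "h = h2_of_coeffs (block_sum n (hcoeff g))"
    if "h \<in> H2 \<and> (\<forall>f\<in>H2. h2_inner (W n f) g = h2_inner f h)" for h
    using that adjoint by (intro H2_eq_if_h2_inner_eq) auto
qed

lemma h2_adjoint_W_pow:
  assumes n: "1 \<le> n" and g: "g \<in> H2"
  shows "(h2_adjoint (W n) ^^ m) g = h2_of_coeffs ((block_sum n ^^ m) (hcoeff g))"
proof (induction m)
  case (Suc m)
  have "l2_seq ((block_sum n ^^ m) (hcoeff g))"
    using l2_seq_block_sum_pow[OF H2_eq_h2_of_coeffs(2)[OF g]] .
  thus ?case
    using Suc h2_adjoint_W[OF n h2_of_coeffs_in_H2(1)] h2_of_coeffs_in_H2(2) by simp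
qed (simp add: H2_eq_h2_of_coeffs(1)[OF g])

section \<open>Mixing\<close>

lemma less_power_self:
  fixes n d :: nat
  assumes "2 \<le> n"
  shows "d < n ^ d"
  using less_exp[of d] power_mono[OF assms, of d] by linarith

lemma eventually_div_sqrt_power_less:
  fixes n :: nat and r c :: real
  assumes "2 \<le> n" "0 < c"
  shows "\<forall>\<^sub>F d in sequentially. r / sqrt (n ^ d) < c"
proof -
  have "(\<lambda>d. r * (1 / sqrt n) ^ d) \<longlonglongrightarrow> 0"
    using assms(1) by (intro tendsto_mult_right_zero LIMSEQ_realpow_zero) auto
  from order_tendstoD(2)[OF this assms(2)] show ?thesis
    by (simp add: real_sqrt_power power_divide)
qed

lemma eventually_block_sum_pow_hits:
  assumes n: "2 \<le> n" and support: "\<And>k. L \<le> k \<Longrightarrow> p k = 0" and q: "l2_seq q" and "0 < e"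
  shows "\<forall>\<^sub>F m in sequentially. \<exists>x. l2_seq x \<and> l2_norm (\<lambda>k. x k - p k) < e \<and> (block_sum n ^^ m) x = q"
proof -
  define r where "r k = q k - (if k = 0 then (\<Sum>i<L. p i) else 0)" for k
  have r: "l2_seq r"
    unfolding r_def using q by (rule l2_seq_diff) (rule l2_seq_finite_support[of 1], simp)
  have p: "l2_seq p" using support by (rule l2_seq_finite_support)
  have hit: "\<exists>x. l2_seq x \<and> l2_norm (\<lambda>k. x k - p k) < e \<and> (block_sum n ^^ m) x = q"
    if small: "l2_norm r / sqrt (n ^ m) < e" and "L \<le> m" for m
  proof (intro exI conjI)
    define x where "x k = p k + (spread n ^^ m) r k" for k
    note spread = l2_seq_spread_pow[OF _ r, of n m]
    show "l2_seq x" unfolding x_def using p spread(1) n by (intro l2_seq_add) auto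
    show "l2_norm (\<lambda>k. x k - p k) < e" using spread(2) small n by (simp add: x_def)
    have "L \<le> n ^ m" using \<open>L \<le> m\<close> less_power_self[OF n, of m] by linarith
    thus "(block_sum n ^^ m) x = q"
      using block_sum_pow_finite_support[of L p, OF support] block_sum_pow_spread_pow[of n m r] n
      by (simp add: x_def[abs_def] block_sum_pow_add r_def)
  qed
  have "\<forall>\<^sub>F m in sequentially. l2_norm r / sqrt (n ^ m) < e \<and> L \<le> m"
    using eventually_div_sqrt_power_less[OF n \<open>0 < e\<close>] eventually_ge_at_top
    by (rule eventually_conj)
  thus ?thesis by (rule eventually_mono) (use hit in blast)
qed

lemma h2_mixing_adjoint_W:
  assumes n: "2 \<le> n"
  shows "h2_mixing (h2_adjoint (W n))"
  unfolding h2_mixing_def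
proof (intro allI impI)
  fix U V assume UV: "h2_open U \<and> U \<noteq> {} \<and> h2_open V \<and> V \<noteq> {}"
  then obtain u v where "u \<in> U" "v \<in> V" by blast
  hence u: "u \<in> H2" and v: "v \<in> H2" using UV by (auto simp: h2_open_def)
  obtain e where "0 < e"
    and e: "\<And>a. l2_seq a \<Longrightarrow> l2_norm (\<lambda>k. a k - hcoeff u k) < e \<Longrightarrow> h2_of_coeffs a \<in> U"
    using h2_open_contains_coeff_ball UV \<open>u \<in> U\<close> by metis
  define p where "p K k = (if k < K then hcoeff u k else 0)" for K k
  have "0 < e/2" using \<open>0 < e\<close> by simp
  then obtain K where K: "l2_norm (\<lambda>k. p K k - hcoeff u k) < e/2"
    using l2_norm_truncation_less[OF H2_eq_h2_of_coeffs(2)[OF u]] unfolding p_def by blast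
  have "\<forall>\<^sub>F m in sequentially. \<exists>x. l2_seq x \<and> l2_norm (\<lambda>k. x k - p K k) < e/2
      \<and> (block_sum n ^^ m) x = hcoeff v"
    using n H2_eq_h2_of_coeffs(2)[OF v] \<open>0 < e/2\<close>
    by (intro eventually_block_sum_pow_hits[of _ K]) (auto simp: p_def)
  moreover have "(h2_adjoint (W n) ^^ m) ` U \<inter> V \<noteq> {}"
    if hit: "\<exists>x. l2_seq x \<and> l2_norm (\<lambda>k. x k - p K k) < e/2 \<and> (block_sum n ^^ m) x = hcoeff v"
    for m
  proof -
    obtain x where x: "l2_seq x" "l2_norm (\<lambda>k. x k - p K k) < e/2" "(block_sum n ^^ m) x = hcoeff v"
      using hit by blast
    have pK: "l2_seq (p K)" by (rule l2_seq_finite_support[of K]) (simp add: p_def)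
    have "l2_norm (\<lambda>k. x k - hcoeff u k) < e"
      using l2_norm_diff_triangle[OF x(1) pK H2_eq_h2_of_coeffs(2)[OF u]] x(2) K by linarith
    hence "h2_of_coeffs x \<in> U" by (rule e[OF x(1)])
    moreover have "(h2_adjoint (W n) ^^ m) (h2_of_coeffs x) = v"
      using h2_adjoint_W_pow[OF _ h2_of_coeffs_in_H2(1)[OF x(1)]] n x(3)
      by (simp add: h2_of_coeffs_in_H2(2)[OF x(1)] H2_eq_h2_of_coeffs(1)[OF v])
    ultimately show ?thesis using \<open>v \<in> V\<close> by blast
  qed
  ultimately have "\<forall>\<^sub>F m in sequentially. (h2_adjoint (W n) ^^ m) ` U \<inter> V \<noteq> {}"
    by (rule eventually_mono)
  thus "\<exists>N. \<forall>k\<ge>N. (h2_adjoint (W n) ^^ k) ` U \<inter> V \<noteq> {}"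
    by (simp add: eventually_sequentially)
qed

section \<open>Hypercyclicity\<close>

lemma exists_gapped_sequence:
  fixes g :: "nat \<Rightarrow> nat"
  obtains m where "\<And>j. g j \<le> m j" "\<And>i j. i < j \<Longrightarrow> m i + g j \<le> m j"
proof
  show "g j \<le> (\<Sum>i\<le>j. g i)" for j by (rule member_le_sum) auto
  show "(\<Sum>t\<le>i. g t) + g j \<le> (\<Sum>t\<le>j. g t)" if "i < j" for i j
  proof -
    have "(\<Sum>t\<le>i. g t) + g j = (\<Sum>t\<in>insert j {..i}. g t)" using that by simp
    also have "\<dots> \<le> (\<Sum>t\<le>j. g t)" using that by (intro sum_mono2) auto
    finally show ?thesis .
  qed
qed

lemma l2_seq_suminf_geometric:
  assumes l2: "\<And>l. l2_seq (u l)" and bound: "\<And>l. l2_norm (u l) \<le> c * (1/2) ^ l"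
  shows "\<And>k. summable (\<lambda>l. u l k)" "l2_seq (\<lambda>k. \<Sum>l. u l k)" "l2_norm (\<lambda>k. \<Sum>l. u l k) \<le> 2 * c"
proof -
  have geometric: "(\<lambda>l. c * (1/2) ^ l) sums (2 * c)"
    using sums_mult[OF geometric_sums[of "1/2::real"], of c] by (simp add: mult.commute)
  have summable: "summable (\<lambda>l. l2_norm (u l))"
    using bound l2_norm_nonneg[OF l2] by (intro summable_comparison_test'[OF sums_summable[OF geometric]]) auto
  note suminf = l2_seq_suminf[OF l2 summable]
  show "summable (\<lambda>l. u l k)" "l2_seq (\<lambda>k. \<Sum>l. u l k)" for k by (fact suminf(1,2))+
  have "(\<Sum>l. l2_norm (u l)) \<le> (\<Sum>l. c * (1/2) ^ l)"
    by (rule suminf_le[OF bound summable sums_summable[OF geometric]])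
  also have "\<dots> = 2 * c" using geometric by (rule sums_unique[symmetric])
  finally show "l2_norm (\<lambda>k. \<Sum>l. u l k) \<le> 2 * c" using suminf(3) by linarith
qed

lemma block_sum_pow_spread_pow_sum_upto:
  assumes n: "2 \<le> n" and support: "\<And>l k. L l \<le> k \<Longrightarrow> w l k = 0"
    and gap: "\<And>l. l < j \<Longrightarrow> m l + (\<Sum>i<j. L i) \<le> m j"
  shows "(\<Sum>l<Suc j. (block_sum n ^^ m j) ((spread n ^^ m l) (w l)) k)
    = (if k = 0 then \<Sum>l<j. \<Sum>i<L l. w l i else 0) + w j k"
proof -
  have "(block_sum n ^^ m j) ((spread n ^^ m l) (w l)) = (\<lambda>k. if k = 0 then \<Sum>i<L l. w l i else 0)"
    if "l < j" for l
  proof -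
    have "L l \<le> (\<Sum>i<j. L i)" using that by (intro member_le_sum) auto
    also have "\<dots> \<le> m j - m l" using gap[OF that] by simp
    also have "\<dots> < n ^ (m j - m l)" by (rule less_power_self[OF n])
    finally have "L l \<le> n ^ (m j - m l)" by simp
    moreover have "m l \<le> m j" using gap[OF that] by simp
    ultimately show ?thesis
      using n block_sum_pow_spread_pow_ge[of n "m l" "m j"]
        block_sum_pow_finite_support[of "L l" "w l", OF support] by simp
  qed
  moreover have "(block_sum n ^^ m j) ((spread n ^^ m j) (w j)) = w j"
    using n by (intro block_sum_pow_spread_pow) simp
  ultimately show ?thesis by (cases "k = 0") simp_all
qed

lemma exists_spread_series:
  assumes n: "2 \<le> n" and support: "\<And>j k. L j \<le> k \<Longrightarrow> w j k = 0"
  obtains x m where "l2_seq x"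
    "\<And>j. l2_norm (\<lambda>k. (block_sum n ^^ m j) x k
        - ((if k = 0 then \<Sum>l<j. \<Sum>i<L l. w l i else 0) + w j k)) \<le> (1/2) ^ j"
proof -
  have "1 \<le> n" using n by simp
  have w: "l2_seq (w j)" for j using support by (rule l2_seq_finite_support)
  have "\<forall>j. \<exists>N. \<forall>d\<ge>N. l2_norm (w j) / sqrt (n ^ d) < (1/2) ^ j"
    using eventually_div_sqrt_power_less[OF n] by (simp add: eventually_sequentially)
  then obtain g where g: "\<And>j d. g j \<le> d \<Longrightarrow> l2_norm (w j) / sqrt (n ^ d) < (1/2) ^ j"
    by metis
  obtain m where m: "\<And>j. g j + (\<Sum>i<j. L i) \<le> m j"
    and gap: "\<And>i j. i < j \<Longrightarrow> m i + (g j + (\<Sum>i<j. L i)) \<le> m j"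
    using exists_gapped_sequence[of "\<lambda>j. g j + (\<Sum>i<j. L i)"] by blast
  have gap_L: "m i + (\<Sum>t<j. L t) \<le> m j" if "i < j" for i j using gap[OF that] by simp
  have m_mono: "m i \<le> m j" if "i < j" for i j using gap[OF that] by simp
  have spread: "l2_seq ((spread n ^^ d) (w l))" "l2_norm ((spread n ^^ d) (w l)) \<le> (1/2) ^ l"
    if "g l \<le> d" for l d
    using l2_seq_spread_pow[OF \<open>1 \<le> n\<close> w] g[OF that] by (auto simp del: of_nat_power)
  define u where "u l = (spread n ^^ m l) (w l)" for l
  have u: "l2_seq (u l)" "l2_norm (u l) \<le> 1 * (1/2) ^ l" for l
    unfolding u_def using spread m[of l] by auto
  define x where "x k = (\<Sum>l. u l k)" for k
  note x = l2_seq_suminf_geometric[OF u]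
  show ?thesis
  proof (rule that)
    show "l2_seq x" unfolding x_def[abs_def] by (rule x(2))
    fix j
    define v where "v l = (block_sum n ^^ m j) (u l)" for l
    define tail where "tail l = (spread n ^^ (m (l + Suc j) - m j)) (w (l + Suc j))" for l
    have v_tail: "v (l + Suc j) = tail l" for l
      unfolding v_def u_def tail_def using m_mono[of j "l + Suc j"]
      by (intro block_sum_pow_spread_pow_le[OF \<open>1 \<le> n\<close>]) auto
    have tail: "l2_seq (tail l)" "l2_norm (tail l) \<le> (1/2) ^ Suc j * (1/2) ^ l" for l
    proof -
      have "g (l + Suc j) \<le> m (l + Suc j) - m j" using gap[of j "l + Suc j"] by simp
      from spread[OF this] show "l2_seq (tail l)" "l2_norm (tail l) \<le> (1/2) ^ Suc j * (1/2) ^ l"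
        unfolding tail_def by (simp_all add: power_add mult.commute)
    qed
    have head: "(\<Sum>l<Suc j. v l k) = (if k = 0 then \<Sum>l<j. \<Sum>i<L l. w l i else 0) + w j k" for k
      unfolding v_def u_def
      by (rule block_sum_pow_spread_pow_sum_upto[where L=L and w=w and m=m, OF n support gap_L])
    have "summable (\<lambda>l. v l k)" for k
      unfolding v_def block_sum_pow by (intro summable_sum x(1))
    hence split: "(block_sum n ^^ m j) x k = (\<Sum>l. tail l k) + (\<Sum>l<Suc j. v l k)" for k
      unfolding x_def[abs_def] block_sum_pow_suminf[OF x(1)] v_def[symmetric]
      by (simp add: suminf_split_initial_segment[of _ "Suc j"] v_tail[simplified])
    show "l2_norm (\<lambda>k. (block_sum n ^^ m j) x k
        - ((if k = 0 then \<Sum>l<j. \<Sum>i<L l. w l i else 0) + w j k)) \<le> (1/2) ^ j"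
      using l2_seq_suminf_geometric(3)[OF tail] by (simp add: split head del: sum.lessThan_Suc)
  qed
qed

text \<open>The corrections \<open>c\<^sub>j e\<^sub>0\<close> cancel the collapsed earlier terms, which telescope to \<open>c\<^sub>j\<close>.\<close>

lemma exists_block_sum_pow_approximations:
  assumes n: "2 \<le> n" and support: "\<And>j k. L j \<le> k \<Longrightarrow> y j k = 0"
  obtains x m where "l2_seq x" "\<And>j. l2_norm (\<lambda>k. (block_sum n ^^ m j) x k - y j k) \<le> (1/2) ^ j"
proof -
  define c where "c j = (if j = 0 then 0 else \<Sum>i<L (j - 1). y (j - 1) i)" for j
  define w where "w j k = y j k - (if k = 0 then c j else 0)" for j k
  have w_support: "w j k = 0" if "Suc (L j) \<le> k" for j k
    using that support by (simp add: w_def)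
  have "(\<Sum>i<Suc (L j). w j i) = (\<Sum>i<L j. y j i) - c j" for j
    using support by (simp add: w_def sum_subtractf)
  hence telescope: "(\<Sum>l<j. \<Sum>i<Suc (L l). w l i) = c j" for j
    by (induction j) (simp_all add: c_def)
  obtain x m where x: "l2_seq x" and approx: "\<And>j. l2_norm (\<lambda>k. (block_sum n ^^ m j) x k
      - ((if k = 0 then \<Sum>l<j. \<Sum>i<Suc (L l). w l i else 0) + w j k)) \<le> (1/2) ^ j"
    using exists_spread_series[of n "\<lambda>j. Suc (L j)" w, OF n w_support] by blast
  have "(if k = 0 then \<Sum>l<j. \<Sum>i<Suc (L l). w l i else 0) + w j k = y j k" for j k
    unfolding telescope by (simp add: w_def)
  hence "l2_norm (\<lambda>k. (block_sum n ^^ m j) x k - y j k) \<le> (1/2) ^ j" for j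
    using approx[of j] by simp
  with x show ?thesis by (rule that)
qed

lemma h2_hypercyclic_adjoint_W:
  assumes n: "2 \<le> n"
  shows "h2_hypercyclic (h2_adjoint (W n))"
proof -
  \<comment> \<open>Every list occurs at indices \<open>j\<close> of every size, so the error \<open>2\<^sup>-\<^sup>j\<close> can be made small.\<close>
  define xs :: "nat \<Rightarrow> (rat \<times> rat) list" where "xs j = from_nat (fst (prod_decode j))" for j
  have "\<And>j k. length (xs j) \<le> k \<Longrightarrow> rat_seq (xs j) k = 0" by (rule rat_seq_eq_0)
  then obtain x m where x: "l2_seq x"
    and approx: "\<And>j. l2_norm (\<lambda>k. (block_sum n ^^ m j) x k - rat_seq (xs j) k) \<le> (1/2) ^ j"
    using exists_block_sum_pow_approximations[of n "\<lambda>j. length (xs j)" "\<lambda>j. rat_seq (xs j)", OF n]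
    by blast
  show ?thesis unfolding h2_hypercyclic_def
  proof (intro bexI ballI allI impI)
    show "h2_of_coeffs x \<in> H2" by (rule h2_of_coeffs_in_H2(1)[OF x])
    fix g and e :: real assume g: "g \<in> H2" and "0 < e"
    note g_coeffs = H2_eq_h2_of_coeffs(2)[OF g]
    obtain ys where ys: "l2_norm (\<lambda>k. rat_seq ys k - hcoeff g k) < e/2"
      using rat_seq_dense[OF g_coeffs, of "e/2"] \<open>0 < e\<close> by auto
    obtain J where J: "(1/2::real) ^ J < e/2"
      using real_arch_pow_inv[of "e/2" "1/2"] \<open>0 < e\<close> by auto
    define j where "j = prod_encode (to_nat ys, J)"
    have j: "(1/2::real) ^ j \<le> (1/2) ^ J"
      using le_prod_encode_2 by (intro power_decreasing) (auto simp: j_def)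
    have "xs j = ys" by (simp add: xs_def j_def)
    have T: "l2_seq ((block_sum n ^^ m j) x)" by (rule l2_seq_block_sum_pow[OF x])
    have "h2_norm (\<lambda>z. (h2_adjoint (W n) ^^ m j) (h2_of_coeffs x) z - g z)
        = l2_norm (\<lambda>k. (block_sum n ^^ m j) x k - hcoeff g k)"
      using h2_adjoint_W_pow[OF _ h2_of_coeffs_in_H2(1)[OF x]] n h2_norm_diff_h2_of_coeffs[OF T g]
      by (simp add: h2_of_coeffs_in_H2(2)[OF x])
    also have "\<dots> \<le> l2_norm (\<lambda>k. (block_sum n ^^ m j) x k - rat_seq ys k)
        + l2_norm (\<lambda>k. rat_seq ys k - hcoeff g k)"
      by (rule l2_norm_diff_triangle[OF T l2_seq_rat_seq g_coeffs])
    also have "\<dots> < e" using approx[of j] ys J j unfolding \<open>xs j = ys\<close> by linarith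
    finally show "\<exists>k. h2_norm (\<lambda>z. (h2_adjoint (W n) ^^ k) (h2_of_coeffs x) z - g z) < e" by blast
  qed
qed

theorem mainTheorem1:
  fixes n :: nat
  assumes "n \<ge> 2"
  shows "h2_mixing (h2_adjoint (W n)) \<and> h2_hypercyclic (h2_adjoint (W n))"
  using h2_mixing_adjoint_W[OF assms] h2_hypercyclic_adjoint_W[OF assms] by (rule conjI)

end
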